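(* Let $\epsilon>0$ and let $K(x,y)=\mathbf{1}(\|x-y\|_2\le\epsilon)$ be the $\epsilon$-neighborhood kernel. Then there exist $d,k\in\mathbb{N}$ and a finite dataset $X\subset\mathbb{R}^d$ such that $p(X)=\infty$; that is, the optimal kernel $k$-means cost of $X$ with respect to $K$ is $0$ while every interpretable decision tree with $k$ leaves on $X$ has strictly positive kernel $k$-means cost.
   Context: Kernel $k$-means cost of a partition $C_1,\dots,C_k$ of $X$ with respect to $K$: $\mathrm{cost}(C_1,\dots,C_k)=\sum_{x\in X}K(x,x)-\sum_l\frac{1}{|C_l|}\sum_{x,y\in C_l}K(x,y)$ (empty clusters contribute $0$); $\mathrm{cost}_{opt}(X)$ is its minimum over partitions into $k$ parts. An interpretable decision tree with $k$ leaves is a binary tree whose leaves partition $X$, where each internal node splits its data $X^u$ into $\{x\in X^u:x_i\in[\theta_1,\theta_2]\}$ and $\{x\in X^u:x_i\notin[\theta_1,\theta_2]\}$ for some $i\in[d]$ and reals $\theta_1<\theta_2$; $\mathrm{cost}(T,X)$ is the cost of its leaf partition. The price of explainability is $p(X)=\min_T \mathrm{cost}(T,X)/\mathrm{cost}_{opt}(X)$, with the convention that a positive number divided by $0$ is $\infty$. *)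

theory Defs
  imports Main "HOL-Analysis.Analysis"
begin

text \<open>Points of R^d are represented as functions nat => real vanishing at indices >= d.\<close>

definition Rd :: "nat \<Rightarrow> (nat \<Rightarrow> real) set" where
  "Rd d = {x. \<forall>i\<ge>d. x i = 0}"

definition eucl_dist :: "nat \<Rightarrow> (nat \<Rightarrow> real) \<Rightarrow> (nat \<Rightarrow> real) \<Rightarrow> real" where
  "eucl_dist d x y = sqrt (\<Sum>i<d. (x i - y i)^2)"

definition nbhd_kernel :: "real \<Rightarrow> nat \<Rightarrow> (nat \<Rightarrow> real) \<Rightarrow> (nat \<Rightarrow> real) \<Rightarrow> real" where
  "nbhd_kernel eps d x y = (if eucl_dist d x y \<le> eps then 1 else 0)"

definition kmeans_cost :: "('a \<Rightarrow> 'a \<Rightarrow> real) \<Rightarrow> 'a set \<Rightarrow> nat \<Rightarrow> (nat \<Rightarrow> 'a set) \<Rightarrow> real" where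
  "kmeans_cost K X k C =
     (\<Sum>x\<in>X. K x x) -
     (\<Sum>l<k. if C l = {} then 0 else (1 / real (card (C l))) * (\<Sum>x\<in>C l. \<Sum>y\<in>C l. K x y))"

definition is_partition :: "'a set \<Rightarrow> nat \<Rightarrow> (nat \<Rightarrow> 'a set) \<Rightarrow> bool" where
  "is_partition X k C \<longleftrightarrow>
     (\<Union>l<k. C l) = X \<and> (\<forall>l<k. \<forall>m<k. l \<noteq> m \<longrightarrow> C l \<inter> C m = {})"

definition cost_opt :: "('a \<Rightarrow> 'a \<Rightarrow> real) \<Rightarrow> 'a set \<Rightarrow> nat \<Rightarrow> real" where
  "cost_opt K X k = Inf {kmeans_cost K X k C | C. is_partition X k C}"

text \<open>Interpretable decision trees: a node (Node i t1 t2 L R) sends the points x with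
  x i in [t1,t2] to the subtree L and the remaining points to R.\<close>
datatype dtree = Leaf | Node nat real real dtree dtree

fun num_leaves :: "dtree \<Rightarrow> nat" where
  "num_leaves Leaf = 1"
| "num_leaves (Node i t1 t2 L R) = num_leaves L + num_leaves R"

fun valid_tree :: "nat \<Rightarrow> dtree \<Rightarrow> bool" where
  "valid_tree d Leaf = True"
| "valid_tree d (Node i t1 t2 L R) = (i < d \<and> t1 < t2 \<and> valid_tree d L \<and> valid_tree d R)"

fun leaf_sets :: "dtree \<Rightarrow> (nat \<Rightarrow> real) set \<Rightarrow> (nat \<Rightarrow> real) set list" where
  "leaf_sets Leaf S = [S]"
| "leaf_sets (Node i t1 t2 L R) S =
     leaf_sets L {x\<in>S. t1 \<le> x i \<and> x i \<le> t2} @ leaf_sets R {x\<in>S. \<not> (t1 \<le> x i \<and> x i \<le> t2)}"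

definition tree_cost :: "((nat \<Rightarrow> real) \<Rightarrow> (nat \<Rightarrow> real) \<Rightarrow> real) \<Rightarrow> dtree \<Rightarrow> (nat \<Rightarrow> real) set \<Rightarrow> real" where
  "tree_cost K T X = kmeans_cost K X (num_leaves T) (\<lambda>l. leaf_sets T X ! l)"

end

theory Submission
  imports Defs
begin

text \<open>For a kernel with values in {0, 1} and unit diagonal, the cost of a partition is the sum over
  its clusters of the number of non-adjacent ordered pairs in the cluster divided by the cluster
  size; so the cost vanishes exactly when every cluster is a clique of the kernel.
  In units of 2 eps/5, where points are adjacent iff their distance is at most 5/2, take the
  points (2,3), (0,2), (2,0), (3,2). They form two adjacent pairs at distance sqrt 5, hence
  optimal cost 0. A tree with two leaves makes a single interval split on one axis, and that
  split cannot separate the two points sharing that coordinate, (2,3) and (2,0) resp. (0,2) and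
  (3,2), which lie at distance 3 and are not adjacent; so its cost is positive.\<close>

definition boolean_kernel :: "('a \<Rightarrow> 'a \<Rightarrow> real) \<Rightarrow> bool" where
  "boolean_kernel K \<longleftrightarrow> (\<forall>x y. K x y = 0 \<or> K x y = 1) \<and> (\<forall>x. K x x = 1)"

definition nonadjacent_pairs :: "('a \<Rightarrow> 'a \<Rightarrow> real) \<Rightarrow> 'a set \<Rightarrow> ('a \<times> 'a) set" where
  "nonadjacent_pairs K S = {p \<in> S \<times> S. case_prod K p = 0}"

lemma boolean_kernel_nbhd_kernel: "eps \<ge> 0 \<Longrightarrow> boolean_kernel (nbhd_kernel eps d)"
  by (simp add: boolean_kernel_def nbhd_kernel_def eucl_dist_def)

lemma is_partition_finite:
  assumes "finite X" "is_partition X k C" "l < k"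
  shows "finite (C l)"
  using assms unfolding is_partition_def by (metis UN_upper finite_subset lessThan_iff)

lemma sum_boolean_kernel:
  assumes "boolean_kernel K" "finite S"
  shows "(\<Sum>x\<in>S. \<Sum>y\<in>S. K x y) = real (card S)^2 - real (card (nonadjacent_pairs K S))"
proof -
  have "(\<Sum>x\<in>S. \<Sum>y\<in>S. K x y) = (\<Sum>p\<in>S \<times> S. 1 - (if case_prod K p = 0 then 1 else 0))"
    unfolding sum.cartesian_product
    using assms(1) by (intro sum.cong) (auto simp: boolean_kernel_def split: prod.splits)
  also have "\<dots> = real (card (S \<times> S)) - real (card (nonadjacent_pairs K S))"
    using assms(2) by (simp add: sum_subtractf sum.If_cases Int_def nonadjacent_pairs_def)
  finally show ?thesis
    by (simp add: card_cartesian_product power2_eq_square)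
qed

lemma kmeans_cost_boolean_kernel:
  assumes "boolean_kernel K" "finite X" "is_partition X k C"
  shows "kmeans_cost K X k C =
           (\<Sum>l<k. real (card (nonadjacent_pairs K (C l))) / real (card (C l)))"
proof -
  note fin = is_partition_finite[OF assms(2,3)]
  have "(\<Sum>x\<in>X. K x x) = real (card X)"
    using assms(1) by (simp add: boolean_kernel_def)
  also have "card X = (\<Sum>l<k. card (C l))"
    using assms(3) fin card_UN_disjoint[of "{..<k}" C] by (auto simp: is_partition_def)
  finally have diag: "(\<Sum>x\<in>X. K x x) = (\<Sum>l<k. real (card (C l)))"
    by simp
  have cluster: "real (card (C l)) -
      (if C l = {} then 0 else 1 / real (card (C l)) * (\<Sum>x\<in>C l. \<Sum>y\<in>C l. K x y)) =
      real (card (nonadjacent_pairs K (C l))) / real (card (C l))" if "l < k" for l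
    using fin[OF that]
    by (auto simp: sum_boolean_kernel[OF assms(1)] nonadjacent_pairs_def field_simps power2_eq_square)
  show ?thesis
    unfolding kmeans_cost_def diag sum_subtractf[symmetric]
    by (rule sum.cong) (simp_all add: cluster)
qed

lemma kmeans_cost_nonneg:
  assumes "boolean_kernel K" "finite X" "is_partition X k C"
  shows "kmeans_cost K X k C \<ge> 0"
  unfolding kmeans_cost_boolean_kernel[OF assms] by (simp add: sum_nonneg)

lemma kmeans_cost_pos:
  assumes "boolean_kernel K" "finite X" "is_partition X k C"
    and "l < k" "a \<in> C l" "b \<in> C l" "K a b = 0"
  shows "kmeans_cost K X k C > 0"
proof -
  have "finite (C l)"
    using is_partition_finite assms(2-4) .
  then have "card (nonadjacent_pairs K (C l)) > 0" "card (C l) > 0"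
    using assms(5-7) by (auto simp: nonadjacent_pairs_def card_gt_0_iff finite_subset[of _ "C l \<times> C l"])
  then show ?thesis
    unfolding kmeans_cost_boolean_kernel[OF assms(1-3)] using assms(4)
    by (intro sum_pos2[of _ l]) auto
qed

lemma cost_opt_eq_0_if_cliques:
  assumes "boolean_kernel K" "finite X" "is_partition X k C"
    and "\<And>l a b. l < k \<Longrightarrow> a \<in> C l \<Longrightarrow> b \<in> C l \<Longrightarrow> K a b = 1"
  shows "cost_opt K X k = 0"
proof -
  have "nonadjacent_pairs K (C l) = {}" if "l < k" for l
    using assms(4)[OF that] by (auto simp: nonadjacent_pairs_def)
  then have "kmeans_cost K X k C = 0"
    unfolding kmeans_cost_boolean_kernel[OF assms(1-3)] by simp
  then show ?thesis
    unfolding cost_opt_def using assms(3) kmeans_cost_nonneg[OF assms(1,2)]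
    by (intro cInf_eq_minimum) auto
qed

lemma num_leaves_ge_1: "num_leaves T \<ge> 1"
  by (induction T) auto

lemma num_leaves_eq_1_iff: "num_leaves T = 1 \<longleftrightarrow> T = Leaf"
proof (cases T)
  case (Node i t1 t2 L R)
  then show ?thesis using num_leaves_ge_1[of L] num_leaves_ge_1[of R] by simp
qed simp

lemma num_leaves_eq_2_iff: "num_leaves T = 2 \<longleftrightarrow> (\<exists>i t1 t2. T = Node i t1 t2 Leaf Leaf)"
proof (cases T)
  case (Node i t1 t2 L R)
  then show ?thesis
    using num_leaves_ge_1[of L] num_leaves_ge_1[of R]
      num_leaves_eq_1_iff[of L] num_leaves_eq_1_iff[of R]
    by auto
qed simp

lemma is_partition_two_sided: "is_partition X 2 (\<lambda>l. [{x \<in> X. P x}, {x \<in> X. \<not> P x}] ! l)"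
  by (auto simp: is_partition_def numeral_2_eq_2 lessThan_Suc less_Suc_eq)

lemma tree_cost_two_sided:
  "tree_cost K (Node i t1 t2 Leaf Leaf) X =
     kmeans_cost K X 2 (\<lambda>l. [{x \<in> X. t1 \<le> x i \<and> x i \<le> t2}, {x \<in> X. \<not> (t1 \<le> x i \<and> x i \<le> t2)}] ! l)"
  by (simp add: tree_cost_def numeral_2_eq_2)

lemma tree_cost_two_leaves_pos:
  assumes "boolean_kernel K" "finite X"
    and conflict: "\<And>i. i < d \<Longrightarrow> \<exists>a\<in>X. \<exists>b\<in>X. a i = b i \<and> K a b = 0"
    and "valid_tree d T" "num_leaves T = 2"
  shows "tree_cost K T X > 0"
proof -
  obtain i t1 t2 where T: "T = Node i t1 t2 Leaf Leaf"
    using assms(5) num_leaves_eq_2_iff by blast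
  then have "i < d"
    using assms(4) by simp
  then obtain a b where "a \<in> X" "b \<in> X" "a i = b i" "K a b = 0"
    using conflict by blast
  define P where "P x \<longleftrightarrow> t1 \<le> x i \<and> x i \<le> t2" for x :: "nat \<Rightarrow> real"
  define C where "C = (\<lambda>l. [{x \<in> X. P x}, {x \<in> X. \<not> P x}] ! l)"
  define l :: nat where "l = (if P a then 0 else 1)"
  have "l < 2" "a \<in> C l" "b \<in> C l"
    using \<open>a \<in> X\<close> \<open>b \<in> X\<close> \<open>a i = b i\<close> by (simp_all add: l_def C_def P_def)
  then have "kmeans_cost K X 2 C > 0"
    using kmeans_cost_pos[OF assms(1,2) is_partition_two_sided] \<open>K a b = 0\<close>
    unfolding C_def by blast
  then show ?thesis
    by (simp add: T tree_cost_two_sided C_def P_def)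
qed

definition grid_point :: "real \<Rightarrow> real \<Rightarrow> real \<Rightarrow> nat \<Rightarrow> real" where
  "grid_point eps a b = (\<lambda>i. if i = 0 then 2 * eps / 5 * a else if i = 1 then 2 * eps / 5 * b else 0)"

definition four_point_instance :: "real \<Rightarrow> (nat \<Rightarrow> real) set" where
  "four_point_instance eps = {grid_point eps 2 3, grid_point eps 0 2, grid_point eps 2 0, grid_point eps 3 2}"

lemma grid_point_in_Rd: "grid_point eps a b \<in> Rd 2"
  by (simp add: grid_point_def Rd_def)

lemma grid_point_eq_iff:
  assumes "eps > 0"
  shows "grid_point eps a b = grid_point eps a' b' \<longleftrightarrow> a = a' \<and> b = b'"
proof
  assume "grid_point eps a b = grid_point eps a' b'"
  then have "grid_point eps a b 0 = grid_point eps a' b' 0" "grid_point eps a b 1 = grid_point eps a' b' 1"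
    by auto
  then show "a = a' \<and> b = b'"
    using assms by (simp add: grid_point_def)
qed simp

lemma nbhd_kernel_grid_point:
  assumes "eps > 0"
  shows "nbhd_kernel eps 2 (grid_point eps a b) (grid_point eps a' b') =
           (if (a - a')^2 + (b - b')^2 \<le> 25 / 4 then 1 else 0)"
proof -
  let ?s = "(a - a')^2 + (b - b')^2"
  have "eucl_dist 2 (grid_point eps a b) (grid_point eps a' b') = sqrt ((2 * eps / 5)^2 * ?s)"
    by (simp add: eucl_dist_def grid_point_def numeral_2_eq_2 power2_eq_square algebra_simps)
  also have "\<dots> \<le> eps \<longleftrightarrow> (2 * eps / 5)^2 * ?s \<le> eps^2"
    using assms by (meson less_imp_le real_le_lsqrt sqrt_le_D)
  also have "\<dots> \<longleftrightarrow> eps^2 * (4 * ?s) \<le> eps^2 * 25"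
    by (simp add: field_simps power2_eq_square)
  also have "\<dots> \<longleftrightarrow> ?s \<le> 25 / 4"
    using assms by (subst mult_le_cancel_left_pos) auto
  finally show ?thesis
    by (simp add: nbhd_kernel_def)
qed

theorem proposition2:
  fixes eps :: real
  assumes "eps > 0"
  shows "\<exists>(d::nat) (k::nat) (X::(nat \<Rightarrow> real) set).
           1 \<le> k \<and> finite X \<and> X \<subseteq> Rd d \<and>
           cost_opt (nbhd_kernel eps d) X k = 0 \<and>
           (\<forall>T. valid_tree d T \<and> num_leaves T = k \<longrightarrow> tree_cost (nbhd_kernel eps d) T X > 0)"
proof (intro exI[of _ 2] exI[of _ "four_point_instance eps"] conjI allI impI)
  show "1 \<le> (2::nat)"
    by simp
  let ?K = "nbhd_kernel eps 2" and ?X = "four_point_instance eps" and ?p = "grid_point eps"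
  have K: "boolean_kernel ?K"
    using assms by (simp add: boolean_kernel_nbhd_kernel)
  show fin: "finite ?X" and "?X \<subseteq> Rd 2"
    by (simp_all add: four_point_instance_def grid_point_in_Rd)
  let ?C = "\<lambda>l. [{?p 2 3, ?p 0 2}, {?p 2 0, ?p 3 2}] ! l"
  have "is_partition ?X 2 ?C"
    using assms by (auto simp: is_partition_def four_point_instance_def numeral_2_eq_2 lessThan_Suc
        less_Suc_eq grid_point_eq_iff)
  then show "cost_opt ?K ?X 2 = 0"
    by (rule cost_opt_eq_0_if_cliques[OF K fin])
      (use assms in \<open>auto simp: less_2_cases_iff nbhd_kernel_grid_point\<close>)
  fix T assume "valid_tree 2 T \<and> num_leaves T = 2"
  moreover have "\<exists>a\<in>?X. \<exists>b\<in>?X. a i = b i \<and> ?K a b = 0" if "i < 2" for i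
    using that assms unfolding four_point_instance_def less_2_cases_iff
    by (elim disjE; simp add: nbhd_kernel_grid_point; simp add: grid_point_def)
  ultimately show "tree_cost ?K T ?X > 0"
    using tree_cost_two_leaves_pos[OF K fin] by blast
qed

end
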